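(* Let $X$ be a real Banach space which is an $L_1$-predual or an $M$-embedded space, and let $Y$ be a finite co-dimensional closed subspace of $X$. If $Y$ has property-$(HB)$ in $X$, then $Y^{\perp\perp}$ has property-$(HB)$ in $X^{**}$.
   Context: $X$ is an $L_1$-predual if $X^*$ is isometrically isomorphic to $L_1(\mu)$ for some measure $\mu$; $X$ is $M$-embedded if its canonical image is an $M$-ideal in $X^{**}$ (a closed subspace $J$ of $E$ is an $M$-ideal if $E^*=J^\perp\oplus W$ for a closed subspace $W$ with $\|u+w\|=\|u\|+\|w\|$ for $u\in J^\perp,w\in W$). $Y^\perp=\{x^*\in X^*:x^*|_Y=0\}$ and $Y^{\perp\perp}\subseteq X^{**}$ its annihilator. A closed subspace $V$ of $E$ has property-$(HB)$ in $E$ if there is a linear projection $P$ on $E^*$ with range $V^\perp$ and $\|P\|=1$ such that, writing $G=(I-P)(E^* )$, for every $e^*=v^\#+v^\perp$ with $v^\#\in G$, $0\neq v^\perp\in V^\perp$, one has $\|e^*\|>\|v^\#\|$ and $\|e^*\|\ge\|v^\perp\|$. *)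

theory Defs
  imports "HOL-Analysis.Analysis"
begin

definition annihilator :: "'e::real_normed_vector set \<Rightarrow> ('e \<Rightarrow>\<^sub>L real) set" where
  "annihilator V = {f. \<forall>v\<in>V. blinfun_apply f v = 0}"

definition biannihilator :: "'e::real_normed_vector set \<Rightarrow> (('e \<Rightarrow>\<^sub>L real) \<Rightarrow>\<^sub>L real) set" where
  "biannihilator V = annihilator (annihilator V)"

definition canonical_embedding :: "'e::real_normed_vector \<Rightarrow> (('e \<Rightarrow>\<^sub>L real) \<Rightarrow>\<^sub>L real)" where
  "canonical_embedding x = Blinfun (\<lambda>f. blinfun_apply f x)"

definition M_ideal :: "'e::real_normed_vector set \<Rightarrow> bool" where
  "M_ideal J \<longleftrightarrow> subspace J \<and> closed J \<and>
     (\<exists>W. subspace W \<and> closed W \<and>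
          annihilator J \<inter> W = {0} \<and>
          (\<forall>e. \<exists>u\<in>annihilator J. \<exists>w\<in>W. e = u + w) \<and>
          (\<forall>u\<in>annihilator J. \<forall>w\<in>W. norm (u + w) = norm u + norm w))"

definition M_embedded :: "'e::real_normed_vector itself \<Rightarrow> bool" where
  "M_embedded _ \<longleftrightarrow> M_ideal (range (canonical_embedding :: 'e \<Rightarrow> _))"

text \<open>X^* is isometrically isomorphic to L_1(M): a map T from X^* to integrable
functions, linear modulo a.e. equality, norm preserving (hence injective modulo a.e.)
and onto L_1(M) modulo a.e. equality.\<close>
definition L1_isometric :: "'m measure \<Rightarrow> 'e::real_normed_vector itself \<Rightarrow> bool" where
  "L1_isometric M _ \<longleftrightarrow> (\<exists>T :: ('e \<Rightarrow>\<^sub>L real) \<Rightarrow> 'm \<Rightarrow> real.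
      (\<forall>f. integrable M (T f)) \<and>
      (\<forall>f g a b. AE x in M. T (a *\<^sub>R f + b *\<^sub>R g) x = a * T f x + b * T g x) \<and>
      (\<forall>f. (\<integral>x. \<bar>T f x\<bar> \<partial>M) = norm f) \<and>
      (\<forall>h. integrable M h \<longrightarrow> (\<exists>f. AE x in M. T f x = h x)))"

definition property_HB :: "'e::real_normed_vector set \<Rightarrow> bool" where
  "property_HB V \<longleftrightarrow> subspace V \<and> closed V \<and>
     (\<exists>P :: ('e \<Rightarrow>\<^sub>L real) \<Rightarrow>\<^sub>L ('e \<Rightarrow>\<^sub>L real).
        (\<forall>f. blinfun_apply P (blinfun_apply P f) = blinfun_apply P f) \<and> range (blinfun_apply P) = annihilator V \<and> norm P = 1 \<and>
        (\<forall>g\<in>range (\<lambda>f. f - blinfun_apply P f). \<forall>v\<in>annihilator V. v \<noteq> 0 \<longrightarrow>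
            norm (g + v) > norm g \<and> norm (g + v) \<ge> norm v))"

end

theory Submission
  imports Defs
begin

(* In both cases the HB projection P on the dual X' is transported to the third dual X'''.

   If X' = L1(mu), the band projections (multiplication by indicators of measurable sets) commute
   with P; comparing signs pointwise then shows that P is an L-projection.  Adjoints turn L-projections
   into M-projections and vice versa, so P'' is an L-projection on X''' with range the annihilator of
   Y^perp-perp, and an L-projection trivially has property (HB).

   If X is M-embedded, X''' is the L-sum of X^perp and J(X'), the L-projection being J R with R the
   restriction to X.  For Y of finite codimension the annihilator of Y^perp-perp is J(Y^perp), and the
   projection J P R inherits the HB inequalities of P through the L-decomposition. *)

lemma canonical_embedding_apply [simp]: "blinfun_apply (canonical_embedding x) f = blinfun_apply f x"
  unfolding canonical_embedding_def
  by (simp add: bounded_linear_Blinfun_apply[OF blinfun.bounded_linear_left])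

lemma norm_canonical_embedding_le: "norm (canonical_embedding x) \<le> norm x"
proof (rule norm_blinfun_bound)
  show "norm (blinfun_apply (canonical_embedding x) f) \<le> norm x * norm f" for f
    using norm_blinfun[of f x] by (simp add: mult.commute)
qed simp

lemma bounded_linear_canonical_embedding: "bounded_linear canonical_embedding"
  by (rule bounded_linear_intro[where K=1])
     (auto intro!: blinfun_eqI simp: blinfun.bilinear_simps norm_canonical_embedding_le)

lemmas canonical_embedding_add = linear_add[OF bounded_linear.linear[OF bounded_linear_canonical_embedding]]

lemma norm_canonical_embedding_dual: "norm (canonical_embedding (\<phi> :: 'a::real_normed_vector \<Rightarrow>\<^sub>L real)) = norm \<phi>"
proof (rule antisym[OF norm_canonical_embedding_le norm_blinfun_bound])
  show "norm (blinfun_apply \<phi> x) \<le> norm (canonical_embedding \<phi>) * norm x" for x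
    using norm_blinfun[of "canonical_embedding \<phi>" "canonical_embedding x"]
      mult_left_mono[OF norm_canonical_embedding_le[of x] norm_ge_zero[of "canonical_embedding \<phi>"]]
    by simp
qed simp

definition canonical_embedding_blinfun :: "'a::real_normed_vector \<Rightarrow>\<^sub>L (('a \<Rightarrow>\<^sub>L real) \<Rightarrow>\<^sub>L real)" where
  "canonical_embedding_blinfun = Blinfun canonical_embedding"

lemma canonical_embedding_blinfun_apply [simp]: "blinfun_apply canonical_embedding_blinfun = canonical_embedding"
  unfolding canonical_embedding_blinfun_def
  by (rule bounded_linear_Blinfun_apply[OF bounded_linear_canonical_embedding])

lemma norm_canonical_embedding_blinfun_le: "norm canonical_embedding_blinfun \<le> 1"
  by (rule norm_blinfun_bound) (simp_all add: norm_canonical_embedding_le)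

lemma mem_annihilator_iff: "f \<in> annihilator V \<longleftrightarrow> (\<forall>v\<in>V. blinfun_apply f v = 0)"
  by (simp add: annihilator_def)

lemma subspace_annihilator: "subspace (annihilator V)"
  unfolding subspace_def annihilator_def by (simp add: blinfun.bilinear_simps)

lemma closed_annihilator: "closed (annihilator V)"
proof -
  have "annihilator V = (\<Inter>v\<in>V. {f. blinfun_apply f v = 0})"
    by (auto simp: mem_annihilator_iff)
  moreover have "closed {f :: 'a \<Rightarrow>\<^sub>L real. blinfun_apply f v = 0}" for v
    by (intro closed_Collect_eq continuous_on_id bounded_linear.continuous_on[OF blinfun.bounded_linear_left]) simp
  ultimately show ?thesis by auto
qed

lemma subspace_biannihilator: "subspace (biannihilator V)"
  unfolding biannihilator_def by (rule subspace_annihilator)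

lemma closed_biannihilator: "closed (biannihilator V)"
  unfolding biannihilator_def by (rule closed_annihilator)

lemma canonical_embedding_mem_annihilator_biannihilator:
  "\<phi> \<in> annihilator V \<Longrightarrow> canonical_embedding \<phi> \<in> annihilator (biannihilator V)"
  by (simp add: biannihilator_def mem_annihilator_iff)

lemma annihilator_biannihilator_nontrivial:
  assumes "annihilator V \<noteq> {0}"
  shows "annihilator (biannihilator V) \<noteq> {0}"
proof -
  obtain \<phi> where "\<phi> \<in> annihilator V" "\<phi> \<noteq> 0"
    using assms subspace_0[OF subspace_annihilator] by blast
  moreover from \<open>\<phi> \<noteq> 0\<close> have "canonical_embedding \<phi> \<noteq> 0"
    using norm_canonical_embedding_dual[of \<phi>] by force
  ultimately have "canonical_embedding \<phi> \<in> annihilator (biannihilator V)" "canonical_embedding \<phi> \<noteq> 0"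
    by (simp_all add: canonical_embedding_mem_annihilator_biannihilator)
  then show ?thesis by blast
qed

definition dual_map :: "('a::real_normed_vector \<Rightarrow>\<^sub>L 'b::real_normed_vector) \<Rightarrow> ('b \<Rightarrow>\<^sub>L real) \<Rightarrow>\<^sub>L ('a \<Rightarrow>\<^sub>L real)" where
  "dual_map T = Blinfun (\<lambda>z. z o\<^sub>L T)"

lemma dual_map_apply [simp]: "blinfun_apply (dual_map T) z = z o\<^sub>L T"
  unfolding dual_map_def
  by (simp add: bounded_linear_Blinfun_apply[OF bounded_bilinear.bounded_linear_left[OF bounded_bilinear_blinfun_compose]])

lemma norm_dual_map_le: "norm (dual_map T) \<le> norm T"
  by (rule norm_blinfun_bound) (simp_all add: norm_blinfun_compose mult.commute)

lemma dual_map_idempotent: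
  fixes T :: "'a::real_normed_vector \<Rightarrow>\<^sub>L 'a"
  assumes "\<And>f. T (T f) = T f"
  shows "dual_map T (dual_map T z) = dual_map T z"
  by (rule blinfun_eqI) (simp add: assms)

lemma dual_map_eq_0_iff: "dual_map T z = 0 \<longleftrightarrow> z \<in> annihilator (range T)"
proof
  assume "dual_map T z = 0"
  then show "z \<in> annihilator (range T)"
    by (auto simp: mem_annihilator_iff dest: arg_cong[where f = "\<lambda>g. blinfun_apply g _"])
qed (auto simp: mem_annihilator_iff intro: blinfun_eqI)

lemma range_dual_map_idempotent:
  fixes T :: "'a::real_normed_vector \<Rightarrow>\<^sub>L 'a"
  assumes idem: "\<And>f. T (T f) = T f"
  shows "range (dual_map T) = annihilator {f. T f = 0}"
proof (intro set_eqI iffI)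
  fix z assume "z \<in> range (dual_map T)"
  then show "z \<in> annihilator {f. T f = 0}" by (auto simp: mem_annihilator_iff)
next
  fix z assume z: "z \<in> annihilator {f. T f = 0}"
  have "T (f - T f) = 0" for f
    by (simp add: blinfun.bilinear_simps idem)
  then have "z (f - T f) = 0" for f
    using z by (simp add: mem_annihilator_iff)
  then have "dual_map T z = z"
    by (intro blinfun_eqI) (simp add: blinfun.bilinear_simps)
  then show "z \<in> range (dual_map T)" by (metis rangeI)
qed

lemma range_dual_map_dual_map:
  fixes P :: "('a::real_normed_vector \<Rightarrow>\<^sub>L real) \<Rightarrow>\<^sub>L ('a \<Rightarrow>\<^sub>L real)"
  assumes "\<And>f. P (P f) = P f" and "range P = annihilator V"
  shows "range (dual_map (dual_map P)) = annihilator (biannihilator V)"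
proof -
  have "range (dual_map (dual_map P)) = annihilator {z. dual_map P z = 0}"
    by (intro range_dual_map_idempotent dual_map_idempotent assms(1))
  also have "{z. dual_map P z = 0} = biannihilator V"
    by (auto simp: dual_map_eq_0_iff biannihilator_def assms(2) simp del: dual_map_apply)
  finally show ?thesis .
qed

definition predual_restriction :: "((('a::real_normed_vector \<Rightarrow>\<^sub>L real) \<Rightarrow>\<^sub>L real) \<Rightarrow>\<^sub>L real) \<Rightarrow>\<^sub>L ('a \<Rightarrow>\<^sub>L real)" where
  "predual_restriction = dual_map canonical_embedding_blinfun"

lemma predual_restriction_apply [simp]:
  "blinfun_apply (predual_restriction \<Phi>) x = blinfun_apply \<Phi> (canonical_embedding x)"
  by (simp add: predual_restriction_def)

lemma predual_restriction_canonical_embedding [simp]: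
  "predual_restriction (canonical_embedding \<phi>) = \<phi>"
  by (rule blinfun_eqI) simp

lemma predual_restriction_eq_0_iff:
  "predual_restriction \<Phi> = 0 \<longleftrightarrow> \<Phi> \<in> annihilator (range canonical_embedding)"
  using dual_map_eq_0_iff[of canonical_embedding_blinfun \<Phi>]
  by (simp add: predual_restriction_def del: dual_map_apply)

lemma norm_predual_restriction_le: "norm predual_restriction \<le> 1"
  unfolding predual_restriction_def
  using norm_dual_map_le norm_canonical_embedding_blinfun_le by (rule order_trans)

lemma norm_predual_restriction_apply_le:
  "norm (predual_restriction \<Phi> :: 'a::real_normed_vector \<Rightarrow>\<^sub>L real) \<le> norm \<Phi>"
proof -
  have "norm (predual_restriction \<Phi> :: 'a \<Rightarrow>\<^sub>L real)
      \<le> norm (predual_restriction :: _ \<Rightarrow>\<^sub>L ('a \<Rightarrow>\<^sub>L real)) * norm \<Phi>"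
    by (rule norm_blinfun)
  also have "\<dots> \<le> 1 * norm \<Phi>"
    by (intro mult_right_mono norm_predual_restriction_le norm_ge_zero)
  finally show ?thesis by simp
qed

lemma annihilator_eq_0_on_span:
  assumes "v \<in> annihilator Y" and "x \<in> span Y"
  shows "blinfun_apply v x = 0"
  using assms linear_eq_0_on_span[of "blinfun_apply v" Y x] bounded_linear.linear[OF blinfun.bounded_linear_right]
  by (auto simp: mem_annihilator_iff)

lemma bidual_eq_on_annihilator_if_finite_codim:
  fixes Y F :: "'a::real_normed_vector set"
  assumes "finite F" and "span (Y \<union> F) = UNIV"
  shows "\<exists>x. \<forall>v\<in>annihilator Y. blinfun_apply v x = blinfun_apply z v"
  using assms
proof (induction F arbitrary: Y rule: finite_induct)
  case empty
  show ?case
  proof (intro exI[of _ 0] ballI)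
    fix v assume "v \<in> annihilator Y"
    then have "v = 0"
      using annihilator_eq_0_on_span[of v Y] empty by (intro blinfun_eqI) simp
    then show "blinfun_apply v 0 = blinfun_apply z v" by simp
  qed
next
  case (insert f F Y)
  have "span (insert f Y \<union> F) = UNIV" using insert.prems by (simp add: insert_commute)
  then obtain x' where x': "\<forall>v\<in>annihilator (insert f Y). blinfun_apply v x' = blinfun_apply z v"
    using insert.IH by blast
  show ?case
  proof (cases "\<forall>v\<in>annihilator Y. blinfun_apply v f = 0")
    case True
    then have "annihilator Y \<subseteq> annihilator (insert f Y)" by (auto simp: mem_annihilator_iff)
    then show ?thesis using x' by blast
  next
    case False
    then obtain v0 where "v0 \<in> annihilator Y" and "blinfun_apply v0 f \<noteq> 0" by blast
    define v1 where "v1 = v0 /\<^sub>R blinfun_apply v0 f"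
    have v1: "v1 \<in> annihilator Y" "blinfun_apply v1 f = 1"
      using \<open>v0 \<in> annihilator Y\<close> \<open>blinfun_apply v0 f \<noteq> 0\<close>
      by (auto simp: v1_def mem_annihilator_iff blinfun.bilinear_simps)
    text \<open>Correct \<open>x'\<close> along \<open>f\<close>, using a functional \<open>v1\<close> that is dual to \<open>f\<close> modulo \<open>Y\<close>.\<close>
    define x where "x = x' + (blinfun_apply z v1 - blinfun_apply v1 x') *\<^sub>R f"
    show ?thesis
    proof (intro exI[of _ x] ballI)
      fix v assume v: "v \<in> annihilator Y"
      have "v - blinfun_apply v f *\<^sub>R v1 \<in> annihilator (insert f Y)"
        using v v1 by (auto simp: mem_annihilator_iff blinfun.bilinear_simps)
      then have "blinfun_apply (v - blinfun_apply v f *\<^sub>R v1) x' = blinfun_apply z (v - blinfun_apply v f *\<^sub>R v1)"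
        using x' by blast
      then show "blinfun_apply v x = blinfun_apply z v"
        by (simp add: x_def blinfun.bilinear_simps algebra_simps)
    qed
  qed
qed

lemma annihilator_biannihilator_if_finite_codim:
  fixes Y F :: "'a::real_normed_vector set"
  assumes "finite F" and "span (Y \<union> F) = UNIV"
  shows "annihilator (biannihilator Y) = canonical_embedding ` annihilator Y"
proof (intro antisym subsetI)
  fix \<Phi> assume \<Phi>: "\<Phi> \<in> annihilator (biannihilator Y)"
  define \<phi> where "\<phi> = (predual_restriction \<Phi> :: 'a \<Rightarrow>\<^sub>L real)"
  have "\<phi> \<in> annihilator Y"
    using \<Phi> by (auto simp: \<phi>_def mem_annihilator_iff biannihilator_def)
  moreover have "\<Phi> = canonical_embedding \<phi>"
  proof (rule blinfun_eqI)
    fix z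
    obtain x where x: "\<forall>v\<in>annihilator Y. blinfun_apply v x = blinfun_apply z v"
      using bidual_eq_on_annihilator_if_finite_codim[OF assms] by blast
    then have "z - canonical_embedding x \<in> biannihilator Y"
      by (simp add: biannihilator_def mem_annihilator_iff blinfun.bilinear_simps)
    then have "blinfun_apply \<Phi> (z - canonical_embedding x) = 0"
      using \<Phi> by (simp add: mem_annihilator_iff)
    then have "blinfun_apply \<Phi> z = blinfun_apply \<Phi> (canonical_embedding x)"
      by (simp add: blinfun.diff_right)
    also have "\<dots> = blinfun_apply z \<phi>"
      using bspec[OF x \<open>\<phi> \<in> annihilator Y\<close>] by (simp add: \<phi>_def)
    finally show "blinfun_apply \<Phi> z = blinfun_apply (canonical_embedding \<phi>) z" by simp
  qed
  ultimately show "\<Phi> \<in> canonical_embedding ` annihilator Y" by blast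
qed (auto simp: canonical_embedding_mem_annihilator_biannihilator)

section \<open>L- and M-projections\<close>

lemma norm_le_if_functional_bound:
  fixes \<psi> :: "'a::real_normed_vector \<Rightarrow>\<^sub>L real"
  assumes "\<And>a. norm a \<le> 1 \<Longrightarrow> blinfun_apply \<psi> a \<le> c"
  shows "norm \<psi> \<le> c"
proof (rule norm_blinfun_bound)
  show "0 \<le> c" using assms[of 0] by simp
  show "norm (blinfun_apply \<psi> x) \<le> c * norm x" for x
  proof (cases "x = 0")
    case False
    define a where "a = x /\<^sub>R norm x"
    have "norm a \<le> 1" "norm (- a) \<le> 1" using False by (auto simp: a_def)
    then have "\<bar>blinfun_apply \<psi> a\<bar> \<le> c"
      using assms[of a] assms[of "- a"] by (simp add: blinfun.bilinear_simps)
    moreover have "blinfun_apply \<psi> x = norm x * blinfun_apply \<psi> a"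
      using False by (simp add: a_def blinfun.bilinear_simps)
    ultimately show ?thesis by (simp add: abs_mult mult.commute[of "norm x"] mult_right_mono)
  qed simp
qed

lemma norm_idempotent_blinfun:
  fixes P :: "'a::real_normed_vector \<Rightarrow>\<^sub>L 'a"
  assumes "\<And>f. P (P f) = P f" and "norm P \<le> 1" and "P \<noteq> 0"
  shows "norm P = 1"
proof -
  obtain f where "P f \<noteq> 0" using \<open>P \<noteq> 0\<close> by (metis blinfun_eqI blinfun.zero_left)
  moreover have "norm (P f) \<le> norm P * norm (P f)"
    using norm_blinfun[of P "P f"] assms(1) by simp
  ultimately show ?thesis using assms(2) by simp
qed

definition L_projection :: "('a::real_normed_vector \<Rightarrow>\<^sub>L 'a) \<Rightarrow> bool" where
  "L_projection P \<longleftrightarrow> (\<forall>f. P (P f) = P f) \<and> (\<forall>f. norm f = norm (P f) + norm (f - P f))"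

definition M_projection :: "('a::real_normed_vector \<Rightarrow>\<^sub>L 'a) \<Rightarrow> bool" where
  "M_projection P \<longleftrightarrow> (\<forall>f. P (P f) = P f) \<and> (\<forall>f. norm f = max (norm (P f)) (norm (f - P f)))"

lemma norm_L_projection_le:
  assumes "L_projection P" shows "norm P \<le> 1"
proof (rule norm_blinfun_bound)
  show "norm (P f) \<le> 1 * norm f" for f
  proof -
    have "norm f = norm (P f) + norm (f - P f)"
      using assms unfolding L_projection_def by blast
    then show ?thesis using norm_ge_zero[of "f - P f"] by linarith
  qed
qed simp

lemma M_projection_dual_map:
  assumes "L_projection P"
  shows "M_projection (dual_map P)"
proof -
  have idem: "P (P f) = P f" and L: "norm f = norm (P f) + norm (f - P f)" for f
    using assms unfolding L_projection_def by blast+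
  have "norm z = max (norm (z o\<^sub>L P)) (norm (z - (z o\<^sub>L P)))" for z :: "'a \<Rightarrow>\<^sub>L real"
  proof (rule antisym)
    let ?m = "max (norm (z o\<^sub>L P)) (norm (z - (z o\<^sub>L P)))"
    show "norm z \<le> ?m"
    proof (rule norm_blinfun_bound)
      fix f
      have "z f = (z o\<^sub>L P) (P f) + (z - (z o\<^sub>L P)) (f - P f)"
        by (simp add: blinfun.bilinear_simps idem)
      also have "norm \<dots> \<le> norm (z o\<^sub>L P) * norm (P f) + norm (z - (z o\<^sub>L P)) * norm (f - P f)"
        using norm_blinfun[of "z o\<^sub>L P" "P f"] norm_blinfun[of "z - (z o\<^sub>L P)" "f - P f"]
        by (smt (verit) norm_triangle_ineq)
      also have "\<dots> \<le> ?m * norm (P f) + ?m * norm (f - P f)"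
        by (intro add_mono mult_right_mono) auto
      finally show "norm (z f) \<le> ?m * norm f"
        using L[of f] by (simp add: distrib_left)
    qed (simp add: le_max_iff_disj)
    have "norm (P f) \<le> norm f" "norm (f - P f) \<le> norm f" for f
      using L[of f] norm_ge_zero[of "P f"] norm_ge_zero[of "f - P f"] by linarith+
    then have "norm (z (P f)) \<le> norm z * norm f" "norm (z (f - P f)) \<le> norm z * norm f" for f
      using norm_blinfun[of z "P f"] norm_blinfun[of z "f - P f"]
      by (meson mult_left_mono norm_ge_zero order_trans)+
    then have "norm (z o\<^sub>L P) \<le> norm z" "norm (z - (z o\<^sub>L P)) \<le> norm z"
      by (intro norm_blinfun_bound; simp add: blinfun.bilinear_simps)+
    then show "?m \<le> norm z" by simp
  qed
  with dual_map_idempotent[of P, OF idem] show ?thesis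
    unfolding M_projection_def dual_map_apply by blast
qed

lemma L_projection_dual_map:
  assumes "M_projection Q"
  shows "L_projection (dual_map Q)"
proof -
  have idem: "Q (Q f) = Q f" and M: "norm f = max (norm (Q f)) (norm (f - Q f))" for f
    using assms unfolding M_projection_def by blast+
  have "norm \<Phi> = norm (\<Phi> o\<^sub>L Q) + norm (\<Phi> - (\<Phi> o\<^sub>L Q))" for \<Phi> :: "'a \<Rightarrow>\<^sub>L real"
  proof (rule antisym)
    show "norm \<Phi> \<le> norm (\<Phi> o\<^sub>L Q) + norm (\<Phi> - (\<Phi> o\<^sub>L Q))"
      by (metis add.commute diff_add_cancel norm_triangle_ineq)
    text \<open>Testing \<open>\<Phi>\<close> on \<open>Q a + (b - Q b)\<close>, which lies in the unit ball whenever \<open>a\<close> and \<open>b\<close> do,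
      bounds the two parts of \<open>\<Phi>\<close> simultaneously.\<close>
    have sum_le: "(\<Phi> o\<^sub>L Q) a + (\<Phi> - (\<Phi> o\<^sub>L Q)) b \<le> norm \<Phi>" if "norm a \<le> 1" "norm b \<le> 1" for a b
    proof -
      define z where "z = Q a + (b - Q b)"
      have "Q z = Q a" "z - Q z = b - Q b"
        by (simp_all add: z_def blinfun.bilinear_simps idem)
      then have "norm z = max (norm (Q a)) (norm (b - Q b))"
        using M[of z] by simp
      also have "\<dots> \<le> 1"
        using M[of a] M[of b] that by simp
      finally have "norm z \<le> 1" .
      then have "\<Phi> z \<le> norm \<Phi>"
        using norm_blinfun[of \<Phi> z] by (smt (verit) mult_left_le norm_ge_zero real_norm_def)
      then show ?thesis
        by (simp add: z_def blinfun.bilinear_simps idem)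
    qed
    have "(\<Phi> - (\<Phi> o\<^sub>L Q)) b \<le> norm \<Phi> - norm (\<Phi> o\<^sub>L Q)" if "norm b \<le> 1" for b
      using norm_le_if_functional_bound[of "\<Phi> o\<^sub>L Q" "norm \<Phi> - (\<Phi> - (\<Phi> o\<^sub>L Q)) b"] sum_le that
      by fastforce
    then have "norm (\<Phi> - (\<Phi> o\<^sub>L Q)) \<le> norm \<Phi> - norm (\<Phi> o\<^sub>L Q)"
      by (rule norm_le_if_functional_bound)
    then show "norm (\<Phi> o\<^sub>L Q) + norm (\<Phi> - (\<Phi> o\<^sub>L Q)) \<le> norm \<Phi>" by simp
  qed
  with dual_map_idempotent[of Q, OF idem] show ?thesis
    unfolding L_projection_def dual_map_apply by blast
qed

lemma property_HBI:
  fixes P :: "('a::real_normed_vector \<Rightarrow>\<^sub>L real) \<Rightarrow>\<^sub>L ('a \<Rightarrow>\<^sub>L real)"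
  assumes "subspace V" and "closed V"
    and idem: "\<And>f. P (P f) = P f" and range: "range P = annihilator V" and "norm P = 1"
    and strict: "\<And>g v. P g = 0 \<Longrightarrow> P v = v \<Longrightarrow> v \<noteq> 0 \<Longrightarrow> norm g < norm (g + v)"
    and weak: "\<And>g v. P g = 0 \<Longrightarrow> P v = v \<Longrightarrow> norm v \<le> norm (g + v)"
  shows "property_HB V"
  unfolding property_HB_def
proof (intro conjI exI[of _ P] ballI impI)
  fix g v assume g: "g \<in> range (\<lambda>f. f - P f)" and v: "v \<in> annihilator V" and "v \<noteq> 0"
  from g have "P g = 0"
    using idem by (auto simp: blinfun.bilinear_simps)
  moreover from v obtain f where "v = P f"
    using range by blast
  then have "P v = v" by (simp add: idem)
  ultimately show "norm g < norm (g + v)" "norm v \<le> norm (g + v)"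
    using strict weak \<open>v \<noteq> 0\<close> by blast+
qed (use assms in blast)+

lemma property_HBE:
  fixes V :: "'a::real_normed_vector set"
  assumes "property_HB V"
  obtains P :: "('a \<Rightarrow>\<^sub>L real) \<Rightarrow>\<^sub>L ('a \<Rightarrow>\<^sub>L real)"
  where "\<And>f. P (P f) = P f" and "range P = annihilator V" and "norm P = 1"
    and "\<And>g v. P g = 0 \<Longrightarrow> P v = v \<Longrightarrow> v \<noteq> 0 \<Longrightarrow> norm g < norm (g + v)"
    and "\<And>g v. P g = 0 \<Longrightarrow> P v = v \<Longrightarrow> norm v \<le> norm (g + v)"
proof -
  obtain P :: "('a \<Rightarrow>\<^sub>L real) \<Rightarrow>\<^sub>L ('a \<Rightarrow>\<^sub>L real)" where
    idem: "\<forall>f. P (P f) = P f" and range: "range P = annihilator V" and norm: "norm P = 1"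
    and HB: "\<forall>g\<in>range (\<lambda>f. f - P f). \<forall>v\<in>annihilator V. v \<noteq> 0 \<longrightarrow>
       norm (g + v) > norm g \<and> norm (g + v) \<ge> norm v"
    using assms unfolding property_HB_def by (elim conjE exE) (rule that)
  have HB': "norm g < norm (g + v) \<and> norm v \<le> norm (g + v)"
    if "P g = 0" "P v = v" "v \<noteq> 0" for g v
  proof -
    have "g \<in> range (\<lambda>f. f - P f)" using that(1) by (intro image_eqI[of _ _ g]) simp_all
    moreover have "v \<in> annihilator V" using range that(2) by (metis rangeI)
    ultimately show ?thesis using HB that(3) by blast
  qed
  show thesis
  proof (rule that)
    show "P (P f) = P f" for f using idem by blast
    show "norm g < norm (g + v)" if "P g = 0" "P v = v" "v \<noteq> 0" for g v
      using HB' that by blast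
    show "norm v \<le> norm (g + v)" if "P g = 0" "P v = v" for g v
    proof (cases "v = 0")
      case False then show ?thesis using HB' that by blast
    qed simp
  qed (fact range norm)+
qed

lemma annihilator_nontrivial_if_property_HB:
  assumes "property_HB V"
  shows "annihilator V \<noteq> {0}"
proof -
  obtain P :: "('a \<Rightarrow>\<^sub>L real) \<Rightarrow>\<^sub>L ('a \<Rightarrow>\<^sub>L real)"
    where "range P = annihilator V" and "norm P = 1"
    using assms by (rule property_HBE)
  moreover obtain f where "P f \<noteq> 0"
    using \<open>norm P = 1\<close> by (metis blinfun_eqI norm_zero zero_blinfun.rep_eq zero_neq_one)
  ultimately show ?thesis by blast
qed

lemma property_HB_if_L_projection:
  fixes P :: "('a::real_normed_vector \<Rightarrow>\<^sub>L real) \<Rightarrow>\<^sub>L ('a \<Rightarrow>\<^sub>L real)"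
  assumes "subspace V" and "closed V" and "L_projection P" and range: "range P = annihilator V"
    and nontrivial: "annihilator V \<noteq> {0}"
  shows "property_HB V"
proof -
  have idem: "P (P f) = P f" and L: "norm f = norm (P f) + norm (f - P f)" for f
    using \<open>L_projection P\<close> unfolding L_projection_def by blast+
  have add: "norm (g + v) = norm g + norm v" if "P g = 0" "P v = v" for g v
    using L[of "g + v"] that by (simp add: blinfun.bilinear_simps add.commute)
  have "P \<noteq> 0" using range nontrivial by auto
  then have "norm P = 1"
    by (intro norm_idempotent_blinfun idem norm_L_projection_le \<open>L_projection P\<close>)
  with assms(1,2) idem range show ?thesis
    by (rule property_HBI) (auto simp: add)
qed

section \<open>Preduals of L1-spaces\<close>

lemma abs_add_eq_if_not_opposite:
  fixes a b :: real
  assumes "\<not> a * b < 0"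
  shows "\<bar>a + b\<bar> = \<bar>a\<bar> + \<bar>b\<bar>"
  using assms by (cases "0 \<le> a"; cases "0 \<le> b") (auto simp: mult_less_0_iff)

locale L1_isometry =
  fixes M :: "'m measure" and T :: "'e::real_normed_vector \<Rightarrow> 'm \<Rightarrow> real"
  assumes integrable_T: "\<And>f. integrable M (T f)"
    and AE_T_linear: "\<And>f g a b. AE x in M. T (a *\<^sub>R f + b *\<^sub>R g) x = a * T f x + b * T g x"
    and integral_abs_T: "\<And>f. (\<integral>x. \<bar>T f x\<bar> \<partial>M) = norm f"
    and T_surj: "\<And>h. integrable M h \<Longrightarrow> \<exists>f. AE x in M. T f x = h x"
begin

lemma measurable_T [measurable]: "T f \<in> borel_measurable M"
  using integrable_T by (rule borel_measurable_integrable)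

lemma AE_T_add: "AE x in M. T (f + g) x = T f x + T g x"
  using AE_T_linear[of 1 f 1 g] by simp

lemma AE_T_diff: "AE x in M. T (f - g) x = T f x - T g x"
  using AE_T_linear[of 1 f "-1" g] by simp

lemma AE_T_zero: "AE x in M. T 0 x = 0"
  using AE_T_linear[of 0 f 0 f] by simp

lemma norm_eq_integral_abs:
  assumes "AE x in M. T f x = k x" and [measurable]: "k \<in> borel_measurable M"
  shows "norm f = (\<integral>x. \<bar>k x\<bar> \<partial>M)"
proof -
  have "(\<integral>x. \<bar>T f x\<bar> \<partial>M) = (\<integral>x. \<bar>k x\<bar> \<partial>M)"
    using assms(1) by (intro integral_cong_AE) auto
  then show ?thesis by (simp add: integral_abs_T)
qed

lemma T_eqI:
  assumes "AE x in M. T f x = T g x"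
  shows "f = g"
proof -
  have "AE x in M. T (f - g) x = 0"
    using AE_T_diff[of f g] assms by eventually_elim simp
  then have "norm (f - g) = 0"
    by (simp add: norm_eq_integral_abs[where k = "\<lambda>_. 0"])
  then show ?thesis by simp
qed

lemma norm_add_eq_if_AE:
  assumes "AE x in M. \<bar>T f x\<bar> + \<bar>T g x\<bar> = \<bar>T h x\<bar>"
  shows "norm f + norm g = norm h"
proof -
  have "norm f + norm g = (\<integral>x. \<bar>T f x\<bar> + \<bar>T g x\<bar> \<partial>M)"
    using integral_abs_T by (simp add: integrable_T)
  also have "\<dots> = (\<integral>x. \<bar>T h x\<bar> \<partial>M)"
    using assms by (intro integral_cong_AE) auto
  finally show ?thesis by (simp add: integral_abs_T)
qed

lemma norm_le_if_AE:
  assumes "AE x in M. \<bar>T f x\<bar> \<le> \<bar>T g x\<bar>"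
  shows "norm f \<le> norm g"
  using integral_mono_AE[of M "\<lambda>x. \<bar>T f x\<bar>" "\<lambda>x. \<bar>T g x\<bar>"] assms
  by (simp add: integrable_T integral_abs_T)

definition band_proj :: "'m set \<Rightarrow> 'e \<Rightarrow> 'e" where
  "band_proj B f = (SOME h. AE x in M. T h x = T f x * indicator B x)"

lemma AE_T_band_proj:
  assumes "B \<in> sets M"
  shows "AE x in M. T (band_proj B f) x = T f x * indicator B x"
proof -
  have "integrable M (\<lambda>x. T f x * indicator B x)"
    using assms integrable_T by (rule integrable_real_mult_indicator)
  from T_surj[OF this] show ?thesis
    unfolding band_proj_def by (rule someI_ex)
qed

lemma band_proj_add:
  assumes "B \<in> sets M"
  shows "band_proj B (f + g) = band_proj B f + band_proj B g"
proof (rule T_eqI)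
  from AE_T_band_proj[OF assms, of "f + g"] AE_T_band_proj[OF assms, of f]
    AE_T_band_proj[OF assms, of g] AE_T_add[of f g] AE_T_add[of "band_proj B f" "band_proj B g"]
  show "AE x in M. T (band_proj B (f + g)) x = T (band_proj B f + band_proj B g) x"
    by eventually_elim (simp add: algebra_simps)
qed

lemma band_proj_diff:
  assumes "B \<in> sets M"
  shows "band_proj B (f - g) = band_proj B f - band_proj B g"
proof (rule T_eqI)
  from AE_T_band_proj[OF assms, of "f - g"] AE_T_band_proj[OF assms, of f]
    AE_T_band_proj[OF assms, of g] AE_T_diff[of f g] AE_T_diff[of "band_proj B f" "band_proj B g"]
  show "AE x in M. T (band_proj B (f - g)) x = T (band_proj B f - band_proj B g) x"
    by eventually_elim (simp add: algebra_simps)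
qed

lemma band_proj_split:
  assumes "B \<in> sets M"
  shows "band_proj B f + band_proj (space M - B) f = f"
proof (rule T_eqI)
  have "space M - B \<in> sets M" using assms by auto
  from AE_T_band_proj[OF assms, of f] AE_T_band_proj[OF this, of f] AE_space
    AE_T_add[of "band_proj B f" "band_proj (space M - B) f"]
  show "AE x in M. T (band_proj B f + band_proj (space M - B) f) x = T f x"
    by eventually_elim (auto split: split_indicator)
qed

lemma band_proj_compl_band_proj:
  assumes "B \<in> sets M"
  shows "band_proj (space M - B) (band_proj B f) = 0"
proof (rule T_eqI)
  have "space M - B \<in> sets M" using assms by auto
  from AE_T_band_proj[OF assms, of f] AE_T_band_proj[OF this, of "band_proj B f"] AE_T_zero
  show "AE x in M. T (band_proj (space M - B) (band_proj B f)) x = T 0 x"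
    by eventually_elim (auto split: split_indicator)
qed

lemma norm_band_proj_split:
  assumes "B \<in> sets M"
  shows "norm (band_proj B f) + norm (band_proj (space M - B) f) = norm f"
proof (rule norm_add_eq_if_AE)
  have "space M - B \<in> sets M" using assms by auto
  from AE_T_band_proj[OF assms, of f] AE_T_band_proj[OF this, of f] AE_space
  show "AE x in M. \<bar>T (band_proj B f) x\<bar> + \<bar>T (band_proj (space M - B) f) x\<bar> = \<bar>T f x\<bar>"
    by eventually_elim (auto split: split_indicator)
qed

lemma AE_T_eq_0_if_band_proj_eq_0:
  assumes "B \<in> sets M" and "band_proj B f = 0"
  shows "AE x in M. x \<in> B \<longrightarrow> T f x = 0"
  using AE_T_band_proj[OF assms(1), of f] AE_T_zero
  by eventually_elim (auto simp: assms(2) split: split_indicator)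

context
  fixes P :: "'e \<Rightarrow>\<^sub>L 'e"
  assumes idem: "\<And>f. P (P f) = P f"
    and strict: "\<And>g v. P g = 0 \<Longrightarrow> P v = v \<Longrightarrow> v \<noteq> 0 \<Longrightarrow> norm g < norm (g + v)"
    and weak: "\<And>g v. P g = 0 \<Longrightarrow> P v = v \<Longrightarrow> norm v \<le> norm (g + v)"
begin

text \<open>If \<open>w = P (band_proj B g)\<close> were nonzero, moving \<open>w\<close> from one band to the complementary
  one would strictly decrease the norms of both band components of \<open>g\<close>, whose sum is \<open>norm g\<close>.\<close>

lemma band_proj_preserves_kernel:
  assumes B: "B \<in> sets M" and "P g = 0"
  shows "P (band_proj B g) = 0"
proof (rule ccontr)
  define w where "w = P (band_proj B g)"
  assume "P (band_proj B g) \<noteq> 0"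
  then have "w \<noteq> 0" and "P w = w" and "P (- w) = - w"
    by (simp_all add: w_def idem blinfun.bilinear_simps)
  have split: "band_proj B g + band_proj (space M - B) g = g"
    by (rule band_proj_split[OF B])
  have "P (band_proj B g) + P (band_proj (space M - B) g) = 0"
    using arg_cong[OF split, of P] \<open>P g = 0\<close> by (simp add: blinfun.bilinear_simps)
  then have "P (band_proj (space M - B) g) = - w"
    by (simp add: w_def add_eq_0_iff)
  then have "P (band_proj B g - w) = 0" and "P (band_proj (space M - B) g + w) = 0"
    by (simp_all add: blinfun.bilinear_simps \<open>P w = w\<close> w_def[symmetric])
  then have "norm (band_proj B g - w) < norm (band_proj B g)"
    and "norm (band_proj (space M - B) g + w) < norm (band_proj (space M - B) g)"
    using strict[of _ w] strict[of _ "- w"] \<open>w \<noteq> 0\<close> \<open>P w = w\<close> \<open>P (- w) = - w\<close> by fastforce+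
  then have "norm (band_proj B g - w) + norm (band_proj (space M - B) g + w) < norm g"
    using norm_band_proj_split[OF B, of g] by simp
  moreover have "norm g \<le> norm (band_proj B g - w) + norm (band_proj (space M - B) g + w)"
    using norm_triangle_ineq[of "band_proj B g - w" "band_proj (space M - B) g + w"] split
    by (simp add: algebra_simps)
  ultimately show False by simp
qed

lemma band_proj_compl_range:
  assumes B: "B \<in> sets M"
  shows "band_proj (space M - B) (P (band_proj B h)) = 0"
proof -
  define u where "u = P (band_proj B h)"
  define g where "g = band_proj (space M - B) (band_proj B h - u)"
  have B': "space M - B \<in> sets M" using B by auto
  have "P (band_proj B h - u) = 0"
    by (simp add: u_def blinfun.bilinear_simps idem)
  then have "P g = 0"
    unfolding g_def by (rule band_proj_preserves_kernel[OF B'])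
  moreover have "P u = u" by (simp add: u_def idem)
  moreover have "g + u = band_proj B u"
    using band_proj_split[OF B, of u]
    by (simp add: g_def band_proj_diff[OF B'] band_proj_compl_band_proj[OF B] algebra_simps)
  ultimately have "norm u \<le> norm (band_proj B u)"
    using weak by metis
  then have "norm (band_proj (space M - B) u) = 0"
    using norm_band_proj_split[OF B, of u] norm_ge_zero[of "band_proj (space M - B) u"] by linarith
  then show ?thesis by (simp add: u_def)
qed

lemma band_proj_preserves_range:
  assumes B: "B \<in> sets M" and "P v = v"
  shows "P (band_proj B v) = band_proj B v"
proof -
  have B': "space M - B \<in> sets M" using B by auto
  have compl: "space M - (space M - B) = B" using sets.sets_into_space[OF B] by auto
  define u where "u = P (band_proj B v)"
  define u' where "u' = P (band_proj (space M - B) v)"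
  have "u + u' = v"
    using arg_cong[OF band_proj_split[OF B, of v], of P] \<open>P v = v\<close>
    by (simp add: u_def u'_def blinfun.bilinear_simps)
  moreover have "band_proj B u' = 0"
    using band_proj_compl_range[OF B', of v] by (simp add: compl u'_def)
  moreover have "band_proj B u = u"
    using band_proj_split[OF B, of u] band_proj_compl_range[OF B, of v] by (simp add: u_def)
  ultimately have "band_proj B v = u"
    using band_proj_add[OF B, of u u'] by simp
  then show ?thesis by (simp add: u_def)
qed

lemma band_proj_range_eq_0_where_kernel_dominates:
  assumes "P g = 0" and "P v = v"
  defines "C \<equiv> {x \<in> space M. T g x * T v x < 0 \<and> \<bar>T v x\<bar> \<le> \<bar>T g x\<bar>}"
  shows "band_proj C v = 0"
proof (rule ccontr)
  have C [measurable]: "C \<in> sets M" unfolding C_def by measurable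
  assume "band_proj C v \<noteq> 0"
  then have "norm (band_proj C g) < norm (band_proj C g + band_proj C v)"
    by (intro strict band_proj_preserves_kernel band_proj_preserves_range C assms(1,2))
  moreover have "norm (band_proj C g + band_proj C v) \<le> norm (band_proj C g)"
  proof (rule norm_le_if_AE)
    from AE_T_band_proj[OF C, of g] AE_T_band_proj[OF C, of v]
      AE_T_add[of "band_proj C g" "band_proj C v"]
    show "AE x in M. \<bar>T (band_proj C g + band_proj C v) x\<bar> \<le> \<bar>T (band_proj C g) x\<bar>"
      by eventually_elim (auto simp: C_def abs_if mult_less_0_iff split: split_indicator)
  qed
  ultimately show False by simp
qed

lemma band_proj_kernel_eq_0_where_range_dominates:
  assumes "P g = 0" and "P v = v"
  defines "D \<equiv> {x \<in> space M. T g x * T v x < 0 \<and> \<bar>T g x\<bar> < \<bar>T v x\<bar>}"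
  shows "band_proj D g = 0"
proof -
  have D [measurable]: "D \<in> sets M" unfolding D_def by measurable
  have "norm (band_proj D v) \<le> norm (band_proj D g + band_proj D v)"
    by (intro weak band_proj_preserves_kernel band_proj_preserves_range D assms(1,2))
  moreover have "norm (band_proj D g + band_proj D v) + norm (band_proj D g) = norm (band_proj D v)"
  proof (rule norm_add_eq_if_AE)
    from AE_T_band_proj[OF D, of g] AE_T_band_proj[OF D, of v]
      AE_T_add[of "band_proj D g" "band_proj D v"]
    show "AE x in M. \<bar>T (band_proj D g + band_proj D v) x\<bar> + \<bar>T (band_proj D g) x\<bar> = \<bar>T (band_proj D v) x\<bar>"
      by eventually_elim (auto simp: D_def abs_if mult_less_0_iff split: split_indicator)
  qed
  ultimately have "norm (band_proj D g) \<le> 0" by linarith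
  then show ?thesis by simp
qed

text \<open>Where \<open>T g\<close> and \<open>T v\<close> have opposite signs one of them dominates, and by the two
  preceding lemmas the dominated one vanishes almost everywhere there.\<close>

lemma norm_add_kernel_range:
  assumes "P g = 0" and "P v = v"
  shows "norm (g + v) = norm g + norm v"
proof -
  define C where "C = {x \<in> space M. T g x * T v x < 0 \<and> \<bar>T v x\<bar> \<le> \<bar>T g x\<bar>}"
  define D where "D = {x \<in> space M. T g x * T v x < 0 \<and> \<bar>T g x\<bar> < \<bar>T v x\<bar>}"
  have [measurable]: "C \<in> sets M" "D \<in> sets M" unfolding C_def D_def by measurable
  have "AE x in M. x \<in> C \<longrightarrow> T v x = 0"
    using band_proj_range_eq_0_where_kernel_dominates[OF assms]
    by (intro AE_T_eq_0_if_band_proj_eq_0) (simp_all add: C_def)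
  moreover have "AE x in M. x \<in> D \<longrightarrow> T g x = 0"
    using band_proj_kernel_eq_0_where_range_dominates[OF assms]
    by (intro AE_T_eq_0_if_band_proj_eq_0) (simp_all add: D_def)
  ultimately have "AE x in M. \<bar>T g x\<bar> + \<bar>T v x\<bar> = \<bar>T (g + v) x\<bar>"
    using AE_T_add[of g v] AE_space
  proof eventually_elim
    case (elim x)
    have "\<not> T g x * T v x < 0"
    proof
      assume opposite: "T g x * T v x < 0"
      then have "x \<in> C \<or> x \<in> D"
        using \<open>x \<in> space M\<close> by (auto simp: C_def D_def)
      then have "T v x = 0 \<or> T g x = 0"
        using elim(1,2) by blast
      with opposite show False by auto
    qed
    then show ?case
      using elim(3) by (simp add: abs_add_eq_if_not_opposite)
  qed
  then show ?thesis
    by (simp add: norm_add_eq_if_AE)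
qed

lemma L_projection_if_HB: "L_projection P"
  unfolding L_projection_def
proof (intro allI conjI)
  show "P (P f) = P f" for f by (rule idem)
  show "norm f = norm (P f) + norm (f - P f)" for f
    using norm_add_kernel_range[of "f - P f" "P f"]
    by (simp add: blinfun.bilinear_simps idem add.commute)
qed

end

end

lemma L1_isometry_if_L1_isometric:
  fixes M :: "'m measure"
  assumes "L1_isometric M TYPE('a)"
  obtains T :: "('a::real_normed_vector \<Rightarrow>\<^sub>L real) \<Rightarrow> 'm \<Rightarrow> real" where "L1_isometry M T"
  using assms unfolding L1_isometric_def L1_isometry_def by blast

lemma property_HB_biannihilator_if_L1_predual:
  fixes Y :: "'a::real_normed_vector set" and M :: "'m measure"
  assumes "L1_isometric M TYPE('a)" and "property_HB Y"
  shows "property_HB (biannihilator Y)"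
proof -
  obtain T :: "('a \<Rightarrow>\<^sub>L real) \<Rightarrow> 'm \<Rightarrow> real" where "L1_isometry M T"
    using assms(1) by (rule L1_isometry_if_L1_isometric)
  then interpret L1_isometry M T .
  obtain P :: "('a \<Rightarrow>\<^sub>L real) \<Rightarrow>\<^sub>L ('a \<Rightarrow>\<^sub>L real)" where
    idem: "\<And>f. P (P f) = P f" and range: "range P = annihilator Y"
    and "\<And>g v. P g = 0 \<Longrightarrow> P v = v \<Longrightarrow> v \<noteq> 0 \<Longrightarrow> norm g < norm (g + v)"
    and "\<And>g v. P g = 0 \<Longrightarrow> P v = v \<Longrightarrow> norm v \<le> norm (g + v)"
    using assms(2) by (rule property_HBE) blast
  then have "L_projection P"
    by (intro L_projection_if_HB)
  then have "L_projection (dual_map (dual_map P))"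
    by (intro L_projection_dual_map M_projection_dual_map)
  moreover have "range (dual_map (dual_map P)) = annihilator (biannihilator Y)"
    using idem range by (rule range_dual_map_dual_map)
  moreover have "annihilator (biannihilator Y) \<noteq> {0}"
    using assms(2) by (intro annihilator_biannihilator_nontrivial annihilator_nontrivial_if_property_HB)
  ultimately show ?thesis
    by (intro property_HB_if_L_projection subspace_biannihilator closed_biannihilator)
qed

section \<open>M-embedded spaces\<close>

lemma L_complement_eq_canonical_embedding:
  fixes W :: "((('a::real_normed_vector \<Rightarrow>\<^sub>L real) \<Rightarrow>\<^sub>L real) \<Rightarrow>\<^sub>L real) set"
  defines "X_perp \<equiv> annihilator (range (canonical_embedding :: 'a \<Rightarrow> _))"
  assumes "subspace W" and "X_perp \<inter> W = {0}"
    and decomp: "\<And>e. \<exists>u\<in>X_perp. \<exists>w\<in>W. e = u + w"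
    and L: "\<And>u w. u \<in> X_perp \<Longrightarrow> w \<in> W \<Longrightarrow> norm (u + w) = norm u + norm w"
    and "w \<in> W"
  shows "w = canonical_embedding (predual_restriction w :: 'a \<Rightarrow>\<^sub>L real)"
proof -
  let ?R = "predual_restriction :: _ \<Rightarrow>\<^sub>L ('a \<Rightarrow>\<^sub>L real)"
  define \<phi> where "\<phi> = ?R w"
  obtain u' w' where u': "u' \<in> X_perp" and "w' \<in> W" and split: "canonical_embedding \<phi> = u' + w'"
    using decomp by blast
  text \<open>As \<open>R w' = \<phi>\<close> and \<open>R\<close> is contractive, the \<open>L\<close>-sum forces \<open>u' = 0\<close>; then
    \<open>w - J \<phi>\<close> lies in both summands.\<close>
  have "?R w' = \<phi>"
    using arg_cong[OF split, of "blinfun_apply ?R"] u'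
    by (simp add: X_perp_def predual_restriction_eq_0_iff[symmetric] blinfun.bilinear_simps
        del: predual_restriction_apply)
  have "norm u' + norm w' = norm \<phi>"
    using L[OF u' \<open>w' \<in> W\<close>] split norm_canonical_embedding_dual[of \<phi>] by simp
  also have "\<dots> \<le> norm w'"
    using \<open>?R w' = \<phi>\<close> norm_predual_restriction_apply_le[of w'] by simp
  finally have "canonical_embedding \<phi> = w'"
    using split by simp
  then have "w - canonical_embedding \<phi> \<in> W"
    using \<open>w \<in> W\<close> \<open>w' \<in> W\<close> \<open>subspace W\<close> by (simp add: subspace_diff)
  moreover have "w - canonical_embedding \<phi> \<in> X_perp"
    by (simp add: X_perp_def predual_restriction_eq_0_iff[symmetric] blinfun.diff_right \<phi>_def
        del: predual_restriction_apply)
  ultimately have "w - canonical_embedding \<phi> \<in> X_perp \<inter> W" by blast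
  then have "w - canonical_embedding \<phi> = 0"
    using \<open>X_perp \<inter> W = {0}\<close> by blast
  then show ?thesis by (simp add: \<phi>_def)
qed

lemma M_embedded_L_projection:
  assumes "M_embedded TYPE('a::real_normed_vector)"
  shows "L_projection (canonical_embedding_blinfun o\<^sub>L (predual_restriction :: _ \<Rightarrow>\<^sub>L ('a \<Rightarrow>\<^sub>L real)))"
proof -
  let ?R = "predual_restriction :: _ \<Rightarrow>\<^sub>L ('a \<Rightarrow>\<^sub>L real)"
  let ?X_perp = "annihilator (range (canonical_embedding :: 'a \<Rightarrow> _))"
  have "M_ideal (range (canonical_embedding :: 'a \<Rightarrow> _))"
    using assms by (simp add: M_embedded_def)
  then obtain W where "subspace W" and "closed W" and "?X_perp \<inter> W = {0}"
    and decomp: "\<forall>e. \<exists>u\<in>?X_perp. \<exists>w\<in>W. e = u + w"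
    and L: "\<forall>u\<in>?X_perp. \<forall>w\<in>W. norm (u + w) = norm u + norm w"
    unfolding M_ideal_def by (elim conjE exE) (rule that)
  have "norm \<Phi> = norm (canonical_embedding (?R \<Phi>)) + norm (\<Phi> - canonical_embedding (?R \<Phi>))" for \<Phi>
  proof -
    obtain u w where u: "u \<in> ?X_perp" and "w \<in> W" and "\<Phi> = u + w"
      using decomp by blast
    moreover from this have "canonical_embedding (?R \<Phi>) = w"
      using L_complement_eq_canonical_embedding[OF \<open>subspace W\<close> \<open>?X_perp \<inter> W = {0}\<close>, of w] decomp L
      by (simp add: predual_restriction_eq_0_iff[symmetric] blinfun.bilinear_simps
          del: predual_restriction_apply)
    ultimately show ?thesis
      using L u \<open>w \<in> W\<close> by (simp add: add.commute)
  qed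
  moreover have "canonical_embedding (?R (canonical_embedding (?R \<Phi>))) = canonical_embedding (?R \<Phi>)" for \<Phi>
    by simp
  ultimately show ?thesis
    unfolding L_projection_def blinfun_apply_blinfun_compose canonical_embedding_blinfun_apply by blast
qed

lemma norm_split_if_M_embedded:
  assumes "M_embedded TYPE('a::real_normed_vector)"
  shows "norm \<Phi> = norm (\<Phi> - canonical_embedding (predual_restriction \<Phi> :: 'a \<Rightarrow>\<^sub>L real))
    + norm (predual_restriction \<Phi> :: 'a \<Rightarrow>\<^sub>L real)"
proof -
  have "norm \<Phi> = norm (canonical_embedding (predual_restriction \<Phi> :: 'a \<Rightarrow>\<^sub>L real))
      + norm (\<Phi> - canonical_embedding (predual_restriction \<Phi> :: 'a \<Rightarrow>\<^sub>L real))"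
    using M_embedded_L_projection[OF assms]
    unfolding L_projection_def blinfun_apply_blinfun_compose canonical_embedding_blinfun_apply by blast
  then show ?thesis
    by (simp add: norm_canonical_embedding_dual add.commute)
qed

definition third_dual_lift ::
  "(('a::real_normed_vector \<Rightarrow>\<^sub>L real) \<Rightarrow>\<^sub>L ('a \<Rightarrow>\<^sub>L real)) \<Rightarrow>
    ((('a \<Rightarrow>\<^sub>L real) \<Rightarrow>\<^sub>L real) \<Rightarrow>\<^sub>L real) \<Rightarrow>\<^sub>L ((('a \<Rightarrow>\<^sub>L real) \<Rightarrow>\<^sub>L real) \<Rightarrow>\<^sub>L real)" where
  "third_dual_lift P = canonical_embedding_blinfun o\<^sub>L P o\<^sub>L predual_restriction"

lemma third_dual_lift_apply [simp]:
  "blinfun_apply (third_dual_lift P) \<Phi> = canonical_embedding (P (predual_restriction \<Phi>))"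
  by (simp add: third_dual_lift_def)

lemma third_dual_lift_idempotent:
  fixes P :: "('a::real_normed_vector \<Rightarrow>\<^sub>L real) \<Rightarrow>\<^sub>L ('a \<Rightarrow>\<^sub>L real)"
  assumes "\<And>f. P (P f) = P f"
  shows "third_dual_lift P (third_dual_lift P \<Phi>) = third_dual_lift P \<Phi>"
  by (simp add: assms)

lemma range_third_dual_lift:
  fixes P :: "('a::real_normed_vector \<Rightarrow>\<^sub>L real) \<Rightarrow>\<^sub>L ('a \<Rightarrow>\<^sub>L real)"
  assumes "\<And>f. P (P f) = P f"
  shows "range (third_dual_lift P) = canonical_embedding ` range P"
proof (intro antisym subsetI)
  fix \<Psi> assume "\<Psi> \<in> canonical_embedding ` range P"
  then obtain f where "\<Psi> = canonical_embedding (P f)" by blast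
  then have "\<Psi> = third_dual_lift P \<Psi>" by (simp add: assms)
  then show "\<Psi> \<in> range (third_dual_lift P)" by (rule image_eqI[OF _ UNIV_I])
qed auto

lemma norm_third_dual_lift_le:
  fixes P :: "('a::real_normed_vector \<Rightarrow>\<^sub>L real) \<Rightarrow>\<^sub>L ('a \<Rightarrow>\<^sub>L real)"
  shows "norm (third_dual_lift P) \<le> norm P"
proof -
  let ?J = "canonical_embedding_blinfun :: ('a \<Rightarrow>\<^sub>L real) \<Rightarrow>\<^sub>L _"
  let ?R = "predual_restriction :: _ \<Rightarrow>\<^sub>L ('a \<Rightarrow>\<^sub>L real)"
  have "norm (third_dual_lift P) \<le> norm (?J o\<^sub>L P) * norm ?R"
    unfolding third_dual_lift_def by (rule norm_blinfun_compose)
  also have "\<dots> \<le> norm ?J * norm P * 1"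
    by (intro mult_mono norm_blinfun_compose norm_predual_restriction_le) simp_all
  also have "\<dots> \<le> norm P"
    by (simp add: mult_left_le_one_le norm_canonical_embedding_blinfun_le)
  finally show ?thesis .
qed

lemma HB_inequalities_third_dual_lift:
  fixes P :: "('a::real_normed_vector \<Rightarrow>\<^sub>L real) \<Rightarrow>\<^sub>L ('a \<Rightarrow>\<^sub>L real)"
  assumes "M_embedded TYPE('a)"
    and strict: "\<And>g v. P g = 0 \<Longrightarrow> P v = v \<Longrightarrow> v \<noteq> 0 \<Longrightarrow> norm g < norm (g + v)"
    and weak: "\<And>g v. P g = 0 \<Longrightarrow> P v = v \<Longrightarrow> norm v \<le> norm (g + v)"
    and kernel: "third_dual_lift P g = 0" and range: "third_dual_lift P w = w"
  shows "norm w \<le> norm (g + w)" and "w \<noteq> 0 \<Longrightarrow> norm g < norm (g + w)"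
proof -
  let ?J = "canonical_embedding :: ('a \<Rightarrow>\<^sub>L real) \<Rightarrow> _"
  let ?R = "predual_restriction :: _ \<Rightarrow>\<^sub>L ('a \<Rightarrow>\<^sub>L real)"
  have "P (?R g) = 0"
    using arg_cong[OF kernel, of "blinfun_apply ?R"] by simp
  have "P (?R w) = ?R w"
    using arg_cong[OF range, of "blinfun_apply ?R"] by simp
  then have J_R_w: "?J (?R w) = w"
    using range by simp
  text \<open>The \<open>L\<close>-decomposition of the third dual reduces both inequalities to those for \<open>P\<close>.\<close>
  have norm_g_w: "norm (g + w) = norm (g - ?J (?R g)) + norm (?R g + ?R w)"
    using norm_split_if_M_embedded[OF assms(1), of "g + w"] J_R_w
    by (simp add: blinfun.bilinear_simps canonical_embedding_add)
  have norm_g: "norm g = norm (g - ?J (?R g)) + norm (?R g)"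
    by (rule norm_split_if_M_embedded[OF assms(1)])
  have norm_w: "norm w = norm (?R w)"
    using J_R_w norm_canonical_embedding_dual[of "?R w"] by simp
  show "norm w \<le> norm (g + w)"
    using norm_g_w norm_w weak[OF \<open>P (?R g) = 0\<close> \<open>P (?R w) = ?R w\<close>]
      norm_ge_zero[of "g - ?J (?R g)"]
    by linarith
  show "norm g < norm (g + w)" if "w \<noteq> 0"
  proof -
    have "?R w \<noteq> 0"
      using norm_w that by auto
    then show ?thesis
      using norm_g_w norm_g strict[OF \<open>P (?R g) = 0\<close> \<open>P (?R w) = ?R w\<close>] by linarith
  qed
qed

lemma property_HB_biannihilator_if_M_embedded:
  fixes Y :: "'a::real_normed_vector set"
  assumes "M_embedded TYPE('a)" and "\<exists>F. finite F \<and> span (Y \<union> F) = UNIV" and "property_HB Y"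
  shows "property_HB (biannihilator Y)"
proof -
  obtain P :: "('a \<Rightarrow>\<^sub>L real) \<Rightarrow>\<^sub>L ('a \<Rightarrow>\<^sub>L real)" where
    idem: "\<And>f. P (P f) = P f" and range: "range P = annihilator Y" and "norm P = 1"
    and strict: "\<And>g v. P g = 0 \<Longrightarrow> P v = v \<Longrightarrow> v \<noteq> 0 \<Longrightarrow> norm g < norm (g + v)"
    and weak: "\<And>g v. P g = 0 \<Longrightarrow> P v = v \<Longrightarrow> norm v \<le> norm (g + v)"
    using assms(3) by (rule property_HBE) blast
  let ?Q = "third_dual_lift P"
  obtain F where "finite F" and "span (Y \<union> F) = UNIV"
    using assms(2) by blast
  have "range ?Q = canonical_embedding ` range P"
    by (rule range_third_dual_lift[OF idem])
  also have "\<dots> = annihilator (biannihilator Y)"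
    using annihilator_biannihilator_if_finite_codim[OF \<open>finite F\<close> \<open>span (Y \<union> F) = UNIV\<close>]
    by (simp add: range)
  finally have range_Q: "range ?Q = annihilator (biannihilator Y)" .
  have "?Q \<noteq> 0"
  proof
    assume "?Q = 0"
    then have "annihilator (biannihilator Y) = {0}"
      using range_Q by (simp del: third_dual_lift_apply)
    then show False
      using annihilator_biannihilator_nontrivial[OF annihilator_nontrivial_if_property_HB[OF assms(3)]]
      by blast
  qed
  then have "norm ?Q = 1"
    using norm_third_dual_lift_le[of P] \<open>norm P = 1\<close>
    by (intro norm_idempotent_blinfun third_dual_lift_idempotent idem) simp_all
  then show ?thesis
    using HB_inequalities_third_dual_lift[OF assms(1) strict weak]
    by (intro property_HBI[OF subspace_biannihilator closed_biannihilator
          third_dual_lift_idempotent[OF idem] range_Q]) simp_all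
qed

theorem theorem3p12:
  fixes Y :: "'a::banach set" and M :: "'m measure"
  assumes "L1_isometric M TYPE('a) \<or> M_embedded TYPE('a)"
    and "subspace Y" and "closed Y"
    and "\<exists>F. finite F \<and> span (Y \<union> F) = UNIV"
    and "property_HB Y"
  shows "property_HB (biannihilator Y)"
proof (cases "L1_isometric M TYPE('a)")
  case True
  then show ?thesis
    using assms(5) by (rule property_HB_biannihilator_if_L1_predual)
next
  case False
  then have "M_embedded TYPE('a)"
    using assms(1) by blast
  then show ?thesis
    using assms(4,5) by (rule property_HB_biannihilator_if_M_embedded)
qed

end
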